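(* Let $d$ and $p$ be integers with $d>p\ge 2$ and let \[ f_{d,p}(m)=\sum_{j=1}^{p}\binom{j+m-2}{j-1}\binom{d-j+m}{d-j}, \] a polynomial of degree $d-1$ in $m$. Let $\mathbf{V}(f_{d,p})=\{a\in\mathbb{C}: f_{d,p}(a)=0\}$. Then \[ \{-1,-2,\ldots,-(d-p)\}\subset \mathbf{V}(f_{d,p})\cap\mathbb{R}\subset[-(d-2),0). \]
   Context: For an integer $a\ge 0$, $\binom{a+x}{a}$ denotes the polynomial $\prod_{i=1}^{a}(x+i)/a!$ in $x$; so $\binom{j+m-2}{j-1}=\prod_{i=0}^{j-2}(m+i)/(j-1)!$ and $\binom{d-j+m}{d-j}=\prod_{i=1}^{d-j}(m+i)/(d-j)!$. *)

theory Defs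
  imports Complex_Main
begin

text \<open>Note (x gchoose k) = prod_{i<k} (x - i) / k!, so (m + (j-2)) gchoose (j-1) = prod_{i=0}^{j-2}(m+i)/(j-1)!
  and (m + (d-j)) gchoose (d-j) = prod_{i=1}^{d-j}(m+i)/(d-j)!.\<close>
definition f_dp :: "nat \<Rightarrow> nat \<Rightarrow> complex \<Rightarrow> complex" where
  "f_dp d p m = (\<Sum>j = 1..p. ((m + of_int (int j - 2)) gchoose (j - 1))
                            * ((m + of_nat (d - j)) gchoose (d - j)))"

end

theory Submission
  imports Defs
begin

text \<open>Written with rising factorials, the \<open>j\<close>-th summand of \<open>f_dp d p m\<close> is
  \<open>pochhammer m (j - 1) * pochhammer (m + 1) (d - j) / ((j - 1)! * (d - j)!)\<close>.
  At \<open>m = -i\<close> with \<open>1 \<le> i \<le> d - p\<close> the second rising factorial contains the factor \<open>m + i = 0\<close>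
  for every \<open>j \<le> p\<close>. For real \<open>m \<ge> 0\<close> all summands are nonnegative and the first is positive.
  For real \<open>m < 2 - d\<close> all factors of both rising factorials are negative as soon as \<open>j \<ge> 2\<close>,
  so these summands have the sign of \<open>(-1)^(d-1)\<close>; the first summand need not, but together
  with the second one it does, so \<open>f_dp d p m \<noteq> 0\<close> there as well.\<close>

lemma gbinomial_eq_pochhammer:
  fixes x :: "'a::field_char_0"
  assumes "a = x + of_nat k - 1"
  shows "a gchoose k = pochhammer x k / fact k"
  using gbinomial_pochhammer'[of a k] assms by simp

definition f_dp_summand :: "nat \<Rightarrow> 'a::field_char_0 \<Rightarrow> nat \<Rightarrow> 'a" where
  "f_dp_summand d m j = pochhammer m (j - 1) * pochhammer (m + 1) (d - j) / (fact (j - 1) * fact (d - j))"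

lemma f_dp_eq_sum_summand: "f_dp d p m = (\<Sum>j = 1..p. f_dp_summand d m j)"
  unfolding f_dp_def f_dp_summand_def
proof (intro sum.cong refl)
  fix j assume "j \<in> {1..p}"
  then have "(m + of_int (int j - 2)) gchoose (j - 1) = pochhammer m (j - 1) / fact (j - 1)"
    by (intro gbinomial_eq_pochhammer) (simp add: of_nat_diff)
  moreover have "(m + of_nat (d - j)) gchoose (d - j) = pochhammer (m + 1) (d - j) / fact (d - j)"
    by (intro gbinomial_eq_pochhammer) simp
  ultimately show "((m + of_int (int j - 2)) gchoose (j - 1)) * ((m + of_nat (d - j)) gchoose (d - j))
      = pochhammer m (j - 1) * pochhammer (m + 1) (d - j) / (fact (j - 1) * fact (d - j))"
    by simp
qed

lemma f_dp_summand_of_real: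
  "f_dp_summand d (of_real r :: 'a::{real_field,field_char_0}) j = of_real (f_dp_summand d r j)"
  unfolding f_dp_summand_def by (simp add: pochhammer_of_real[symmetric])

lemma f_dp_summand_neg_nat_eq_0:
  assumes "1 \<le> i" "i + j \<le> d"
  shows "f_dp_summand d (- of_nat i :: 'a::field_char_0) j = 0"
proof -
  have "pochhammer (- of_nat i + 1 :: 'a) (d - j) = 0"
    unfolding pochhammer_eq_0_iff
    using assms by (intro exI[of _ "i - 1"]) (auto simp: of_nat_diff)
  then show ?thesis by (simp add: f_dp_summand_def)
qed

lemma pochhammer_alternating_pos:
  fixes x :: real
  assumes "x + of_nat n < 1"
  shows "0 < (-1) ^ n * pochhammer x n"
proof -
  have "pochhammer x n = (-1) ^ n * pochhammer (- x - of_nat n + 1) n"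
    using pochhammer_minus[of "- x" n] by simp
  moreover have "0 < pochhammer (- x - of_nat n + 1) n"
    using assms by (intro pochhammer_pos) simp
  ultimately show ?thesis by (simp flip: power_mult_distrib)
qed

lemma sum_f_dp_summand_pos:
  fixes r :: real
  assumes "0 \<le> r" "1 \<le> p"
  shows "0 < (\<Sum>j = 1..p. f_dp_summand d r j)"
proof -
  have "(\<Sum>j = 1..p. f_dp_summand d r j) = f_dp_summand d r 1 + (\<Sum>j = 2..p. f_dp_summand d r j)"
    using assms(2) by (simp add: sum.atLeast_Suc_atMost numeral_2_eq_2)
  moreover have "0 < f_dp_summand d r 1"
    using assms(1) by (simp add: f_dp_summand_def pochhammer_pos)
  moreover have "0 \<le> (\<Sum>j = 2..p. f_dp_summand d r j)"
    using assms(1) by (intro sum_nonneg) (simp add: f_dp_summand_def pochhammer_prod prod_nonneg pochhammer_pos less_imp_le)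
  ultimately show ?thesis by linarith
qed

lemma f_dp_summand_alternating_pos:
  fixes r :: real
  assumes "2 \<le> j" "j \<le> d" "r < 2 - real d"
  shows "0 < (-1) ^ (d - 1) * f_dp_summand d r j"
proof -
  have "0 < (-1) ^ (j - 1) * pochhammer r (j - 1)"
    using assms by (intro pochhammer_alternating_pos) (simp add: of_nat_diff)
  moreover have "0 < (-1) ^ (d - j) * pochhammer (r + 1) (d - j)"
    using assms by (intro pochhammer_alternating_pos) (simp add: of_nat_diff)
  moreover have "(-1) ^ (d - 1) * f_dp_summand d r j
      = ((-1) ^ (j - 1) * pochhammer r (j - 1)) * ((-1) ^ (d - j) * pochhammer (r + 1) (d - j))
        / (fact (j - 1) * fact (d - j))"
    using assms by (simp add: f_dp_summand_def mult_ac flip: power_add)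
  ultimately show ?thesis by simp
qed

text \<open>The first summand alone may have the wrong sign, but the sum of the first two is
  \<open>pochhammer (r + 1) (d - 2) * (d * (r + 1) - 1) / fact (d - 1)\<close>.\<close>

lemma f_dp_summand_1_2_alternating_pos:
  fixes r :: real
  assumes "3 \<le> d" "r < 2 - real d"
  shows "0 < (-1) ^ (d - 1) * (f_dp_summand d r 1 + f_dp_summand d r 2)"
proof -
  define e where "e = d - 2"
  have d: "d = Suc (Suc e)" and "1 \<le> e"
    using assms(1) by (simp_all add: e_def)
  define P where "P = (-1) ^ e * pochhammer (r + 1) e"
  have "0 < P"
    unfolding P_def using assms d by (intro pochhammer_alternating_pos) simp
  have "f_dp_summand d r 1 + f_dp_summand d r 2
      = pochhammer (r + 1) e * (r + 1 + real e) / fact (Suc e) + r * pochhammer (r + 1) e / fact e"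
    unfolding f_dp_summand_def d by (simp add: pochhammer_Suc)
  also have "\<dots> = pochhammer (r + 1) e * ((real e + 2) * (r + 1) - 1) / fact (Suc e)"
    by (simp add: fact_Suc divide_simps) (simp add: algebra_simps)
  finally have "(-1) ^ (d - 1) * (f_dp_summand d r 1 + f_dp_summand d r 2)
      = P * (1 - (real e + 2) * (r + 1)) / fact (Suc e)"
    unfolding P_def d by (simp add: algebra_simps)
  moreover have "(real e + 2) * (r + 1) < 0"
    using assms d \<open>1 \<le> e\<close> by (intro mult_pos_neg) simp_all
  ultimately show ?thesis using \<open>0 < P\<close> by simp
qed

lemma sum_f_dp_summand_alternating_pos:
  fixes r :: real
  assumes "2 \<le> p" "p < d" "r < 2 - real d"
  shows "0 < (-1) ^ (d - 1) * (\<Sum>j = 1..p. f_dp_summand d r j)"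
proof -
  have "(\<Sum>j = 1..p. f_dp_summand d r j)
      = (f_dp_summand d r 1 + f_dp_summand d r 2) + (\<Sum>j = 3..p. f_dp_summand d r j)"
    using assms(1) by (simp add: sum.atLeast_Suc_atMost numeral_2_eq_2 numeral_3_eq_3)
  moreover have "0 \<le> (-1) ^ (d - 1) * (\<Sum>j = 3..p. f_dp_summand d r j)"
    unfolding sum_distrib_left
    using assms f_dp_summand_alternating_pos by (intro sum_nonneg) (simp add: less_imp_le)
  moreover have "0 < (-1) ^ (d - 1) * (f_dp_summand d r 1 + f_dp_summand d r 2)"
    using assms by (intro f_dp_summand_1_2_alternating_pos) simp_all
  ultimately show ?thesis by (simp add: distrib_left)
qed

lemma f_dp_neg_nat_eq_0:
  assumes "1 \<le> i" "i + p \<le> d"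
  shows "f_dp d p (- of_nat i) = 0"
  unfolding f_dp_eq_sum_summand
  using assms by (intro sum.neutral ballI f_dp_summand_neg_nat_eq_0) auto

lemma f_dp_of_real_neq_0:
  assumes "2 \<le> p" "p < d" "r \<notin> {2 - real d..<0}"
  shows "f_dp d p (of_real r) \<noteq> 0"
proof -
  have "(\<Sum>j = 1..p. f_dp_summand d r j) \<noteq> 0"
    using assms sum_f_dp_summand_pos[of r p d] sum_f_dp_summand_alternating_pos[of p d r]
    by (cases "0 \<le> r") auto
  then show ?thesis
    by (simp add: f_dp_eq_sum_summand f_dp_summand_of_real flip: of_real_sum)
qed

theorem theorem2p5:
  fixes d p :: nat
  assumes "p \<ge> 2" and "d > p"
  shows "(\<lambda>k::int. complex_of_int k) ` {-(int d - int p)..-1} \<subseteq> {a. f_dp d p a = 0} \<inter> \<real>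
       \<and> {a. f_dp d p a = 0} \<inter> \<real> \<subseteq> complex_of_real ` {-(real d - 2)..<0}"
proof
  show "(\<lambda>k::int. complex_of_int k) ` {-(int d - int p)..-1} \<subseteq> {a. f_dp d p a = 0} \<inter> \<real>"
  proof clarify
    fix k :: int assume k: "k \<in> {-(int d - int p)..-1}"
    then have "complex_of_int k = - of_nat (nat (- k))" by simp
    moreover have "f_dp d p (- of_nat (nat (- k))) = 0"
      using k by (intro f_dp_neg_nat_eq_0) auto
    ultimately show "complex_of_int k \<in> {a. f_dp d p a = 0} \<inter> \<real>" by simp
  qed
  show "{a. f_dp d p a = 0} \<inter> \<real> \<subseteq> complex_of_real ` {-(real d - 2)..<0}"
  proof (clarify elim!: Reals_cases)
    fix r assume "f_dp d p (of_real r) = 0"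
    then have "r \<in> {2 - real d..<0}"
      using f_dp_of_real_neq_0[OF assms] by blast
    then show "complex_of_real r \<in> complex_of_real ` {-(real d - 2)..<0}" by simp
  qed
qed

end
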